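(* Let $n\ge1$ and let $\pi\in\mathfrak{S}_n$ be a two-stack sortable permutation. Write $\pi=\pi_\ell\cdot(n)\cdot\pi_r$, where $\pi_\ell$ (resp. $\pi_r$) is the part of $\pi$ before (resp. after) the entry $n$, and let $\pi_1=P(\pi_\ell)$, $\pi_2=P(\pi_r)$. Then each of $\pi_1,\pi_2$ is either the empty permutation or a two-stack sortable permutation.
   Context: For a finite sequence $A$ of distinct integers, the stack-sorting operator $\mathcal{S}$ is defined by $\mathcal{S}(\epsilon)=\epsilon$ for the empty sequence and, if $A$ is non-empty with largest element $m$, writing $A=A_L\cdot(m)\cdot A_R$ (concatenation), $\mathcal{S}(A)=\mathcal{S}(A_L)\cdot\mathcal{S}(A_R)\cdot(m)$. A permutation $\sigma\in\mathfrak{S}_n$ ($n\ge1$), viewed as a sequence, is two-stack sortable if $\mathcal{S}(\mathcal{S}(\sigma))$ is the identity; the empty permutation is not considered two-stack sortable. For a sequence $A$ of distinct integers, $P(A)$ is its standardization: the permutation of $\{1,\dots,\operatorname{len}(A)\}$ having the same relative order as $A$ (with $P(\epsilon)=\epsilon$). *)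

theory Defs
  imports Main
begin

text \<open>Finite sequences of distinct entries are modelled as lists over a linear order.
  The stack-sorting operator: S([]) = []; otherwise, with m the largest entry,
  A = A_L @ [m] @ A_R and S(A) = S(A_L) @ S(A_R) @ [m].
  For distinct lists, A_L = takeWhile (\<noteq> m) A and A_R = tl (dropWhile (\<noteq> m) A).\<close>

function stack_sort :: "'a::linorder list \<Rightarrow> 'a list" where
  "stack_sort A =
     (if A = [] then []
      else (let m = Max (set A)
            in stack_sort (takeWhile (\<lambda>x. x \<noteq> m) A)
               @ stack_sort (tl (dropWhile (\<lambda>x. x \<noteq> m) A)) @ [m]))"
  by pat_completeness auto
termination
proof (relation "measure length")
  fix A :: "'a list" and m
  assume A: "\<not> A = []" and m: "m = Max (set A)"
  have mem: "m \<in> set A" using A m by simp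
  show "(takeWhile (\<lambda>x. x \<noteq> m) A, A) \<in> measure length"
    using mem by (induction A) auto
  show "(tl (dropWhile (\<lambda>x. x \<noteq> m) A), A) \<in> measure length"
    using A length_dropWhile_le[of "\<lambda>x. x \<noteq> m" A]
    by (cases A) auto
qed auto

definition is_perm :: "nat \<Rightarrow> nat list \<Rightarrow> bool" where
  "is_perm n \<sigma> \<longleftrightarrow> distinct \<sigma> \<and> set \<sigma> = {1..n}"

text \<open>Two-stack sortable: a permutation of {1..n}, n \<ge> 1, with S(S(\<sigma>)) = identity.
  The empty permutation is not two-stack sortable.\<close>
definition two_stack_sortable :: "nat list \<Rightarrow> bool" where
  "two_stack_sortable \<sigma> \<longleftrightarrow> length \<sigma> \<ge> 1 \<and> is_perm (length \<sigma>) \<sigma>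
     \<and> stack_sort (stack_sort \<sigma>) = [1..<length \<sigma> + 1]"

definition standardize :: "'a::linorder list \<Rightarrow> nat list" where
  "standardize A = map (\<lambda>x. card {y \<in> set A. y < x} + 1) A"

end

theory Submission
  imports Defs "HOL-Library.Sublist" "HOL-Library.Multiset"
begin

text \<open>By Knuth's characterization, a sequence is sorted by one pass of \<^const>\<open>stack_sort\<close> iff it
  avoids the pattern 231, so \<open>\<sigma>\<close> is two-stack sortable iff \<open>S(\<sigma>)\<close> avoids 231. Since
  \<open>S(\<pi>) = S(\<pi>\<^sub>\<ell>) S(\<pi>\<^sub>r) n\<close>, both \<open>S(\<pi>\<^sub>\<ell>)\<close> and \<open>S(\<pi>\<^sub>r)\<close> are subsequences of \<open>S(\<pi>)\<close> and
  avoid 231 as well. Finally \<^const>\<open>stack_sort\<close> commutes with order-preserving relabellings, so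
  standardizing does not affect sortability.\<close>

declare stack_sort.simps [simp del]

lemma set_subseq: "subseq xs ys \<Longrightarrow> set xs \<subseteq> set ys"
  by (induction rule: list_emb.induct) auto

lemma subseq3_append:
  assumes "subseq [x, y, z] (L @ R)"
  shows "subseq [x, y, z] L \<or> subseq [x, y, z] R \<or> x \<in> set L \<and> z \<in> set R"
proof -
  obtain xs ys where "[x, y, z] = xs @ ys" "subseq xs L" "subseq ys R"
    using assms by (auto simp: subseq_append_iff)
  then show ?thesis
    by (cases xs; cases "tl xs"; cases "tl (tl xs)") (auto dest!: set_subseq)
qed

lemma stack_sort_Nil [simp]: "stack_sort [] = []"
  by (simp add: stack_sort.simps)

lemma stack_sort_split_Max:
  assumes "m \<notin> set L" and "\<forall>x \<in> set L \<union> set R. x \<le> m"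
  shows "stack_sort (L @ m # R) = stack_sort L @ stack_sort R @ [m]"
proof -
  have "Max (set (L @ m # R)) = m"
    using assms(2) by (intro Max_eqI) auto
  moreover have "\<forall>x \<in> set L. x \<noteq> m"
    using assms(1) by blast
  ultimately show ?thesis
    by (subst stack_sort.simps) (simp add: Let_def takeWhile_append2 dropWhile_append2)
qed

lemma split_at_Max:
  fixes A :: "'a::linorder list"
  assumes "A \<noteq> []"
  obtains L m R where "A = L @ m # R" "m \<notin> set L" "\<forall>x \<in> set L \<union> set R. x \<le> m"
proof -
  define m where "m = Max (set A)"
  have "m \<in> set A" "\<forall>x \<in> set A. x \<le> m"
    using assms by (simp_all add: m_def)
  moreover obtain L R where "A = L @ m # R" "m \<notin> set L"
    using split_list_first[OF \<open>m \<in> set A\<close>] by blast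
  ultimately show thesis
    using that by auto
qed

lemma stack_sort_induct [case_names Nil split]:
  fixes A :: "'a::linorder list"
  assumes "P []"
    and "\<And>L m R. m \<notin> set L \<Longrightarrow> \<forall>x \<in> set L \<union> set R. x \<le> m \<Longrightarrow> P L \<Longrightarrow> P R
           \<Longrightarrow> P (L @ m # R)"
  shows "P A"
proof (induction A rule: length_induct)
  case (1 A)
  show ?case
  proof (cases "A = []")
    case False
    then obtain L m R where A: "A = L @ m # R"
      and max: "m \<notin> set L" "\<forall>x \<in> set L \<union> set R. x \<le> m"
      by (rule split_at_Max)
    then have "P L" "P R"
      using 1 by simp_all
    with A max show ?thesis
      by (simp add: assms(2))
  qed (simp add: assms(1))
qed

lemma mset_stack_sort [simp]: "mset (stack_sort A) = mset A"
proof (induction A rule: stack_sort_induct)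
  case (split L m R)
  then show ?case
    by (simp add: stack_sort_split_Max[OF split.hyps])
qed simp

lemma set_stack_sort [simp]: "set (stack_sort A) = set A"
  by (rule mset_eq_setD) simp

definition contains_231 :: "'a::linorder list \<Rightarrow> bool" where
  "contains_231 A \<longleftrightarrow> (\<exists>a b c. subseq [b, c, a] A \<and> a < b \<and> b < c)"

lemma contains_231_subseq: "contains_231 A \<Longrightarrow> subseq A B \<Longrightarrow> contains_231 B"
  unfolding contains_231_def by (meson subseq_order.trans)

lemma contains_231_split_Max:
  fixes m :: "'a::linorder"
  assumes "m \<notin> set L" and "\<forall>x \<in> set L \<union> set R. x \<le> m"
  shows "contains_231 (L @ m # R) \<longleftrightarrow>
           contains_231 L \<or> contains_231 R \<or> (\<exists>x \<in> set L. \<exists>y \<in> set R. y < x)"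
proof
  assume "contains_231 (L @ m # R)"
  then obtain a b c where abc: "subseq [b, c, a] ((L @ [m]) @ R)" "a < b" "b < c"
    unfolding contains_231_def by auto
  have "c \<le> m"
    using set_subseq[OF abc(1)] assms(2) by auto
  then have "a \<noteq> m" "b \<noteq> m"
    using abc(2,3) by auto
  show "contains_231 L \<or> contains_231 R \<or> (\<exists>x \<in> set L. \<exists>y \<in> set R. y < x)"
    using subseq3_append[OF abc(1)]
  proof (elim disjE conjE)
    assume "subseq [b, c, a] (L @ [m])"
    then have "subseq [b, c, a] L"
      using subseq3_append[of b c a L "[m]"] \<open>a \<noteq> m\<close>
      by (auto dest: list_emb_Nil2 split: if_splits)
    then show ?thesis
      using abc(2,3) unfolding contains_231_def by blast
  next
    assume "subseq [b, c, a] R"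
    then show ?thesis
      using abc(2,3) unfolding contains_231_def by blast
  next
    assume "b \<in> set (L @ [m])" "a \<in> set R"
    then show ?thesis
      using \<open>b \<noteq> m\<close> abc(2) by auto
  qed
next
  assume "contains_231 L \<or> contains_231 R \<or> (\<exists>x \<in> set L. \<exists>y \<in> set R. y < x)"
  then show "contains_231 (L @ m # R)"
  proof (elim disjE bexE)
    assume "contains_231 L"
    then show ?thesis
      by (rule contains_231_subseq) (simp add: subseq_rev_drop_many)
  next
    assume "contains_231 R"
    then show ?thesis
      by (rule contains_231_subseq) (use subseq_drop_many[of R R "L @ [m]"] in simp)
  next
    fix x y
    assume xy: "x \<in> set L" "y \<in> set R" "y < x"
    then have "x < m"
      using assms by (metis UnI1 order_le_less)
    have "subseq ([x] @ [m, y]) (L @ m # R)"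
      using xy(1,2) by (intro list_emb_append_mono) (auto simp: subseq_singleton_left)
    then show ?thesis
      using xy(3) \<open>x < m\<close> unfolding contains_231_def by auto
  qed
qed

theorem sorted_stack_sort_iff: "sorted (stack_sort A) \<longleftrightarrow> \<not> contains_231 A"
proof (induction A rule: stack_sort_induct)
  case Nil
  then show ?case
    by (simp add: contains_231_def)
next
  case (split L m R)
  have "sorted (stack_sort (L @ m # R)) \<longleftrightarrow>
      sorted (stack_sort L) \<and> sorted (stack_sort R) \<and> (\<forall>x \<in> set L. \<forall>y \<in> set R. x \<le> y)"
    using split.hyps by (auto simp: stack_sort_split_Max sorted_append)
  also have "\<dots> \<longleftrightarrow> \<not> contains_231 (L @ m # R)"
    using split.IH contains_231_split_Max[OF split.hyps] by (auto simp: not_less)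
  finally show ?case .
qed

corollary sorted_stack_sort_subseq:
  "sorted (stack_sort B) \<Longrightarrow> subseq A B \<Longrightarrow> sorted (stack_sort A)"
  by (meson sorted_stack_sort_iff contains_231_subseq)

lemma stack_sort_map:
  assumes "strict_mono_on (set A) f"
  shows "stack_sort (map f A) = map f (stack_sort A)"
  using assms
proof (induction A rule: stack_sort_induct)
  case (split L m R)
  have "f x < f m" if "x \<in> set L \<union> set R" "x \<noteq> m" for x
  proof (rule strict_mono_onD[OF split.prems])
    show "x < m"
      using split.hyps(2) that order.not_eq_order_implies_strict by blast
  qed (use that in auto)
  then have "stack_sort (map f (L @ m # R)) = stack_sort (map f L) @ stack_sort (map f R) @ [f m]"
    using stack_sort_split_Max[of "f m" "map f L" "map f R"] split.hyps(1)
    by (force simp: order_le_less)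
  also have "\<dots> = map f (stack_sort (L @ m # R))"
  proof -
    have "strict_mono_on (set L) f" "strict_mono_on (set R) f"
      using split.prems by (auto elim: monotone_on_subset)
    then show ?thesis
      using split.IH by (simp add: stack_sort_split_Max[OF split.hyps])
  qed
  finally show ?case .
qed simp

definition rank :: "'a::linorder list \<Rightarrow> 'a \<Rightarrow> nat" where
  "rank A x = card {y \<in> set A. y < x} + 1"

lemma standardize_eq_map_rank: "standardize A = map (rank A) A"
  by (simp add: standardize_def rank_def)

lemma mono_rank: "mono (rank A)"
  by (rule monoI) (auto simp: rank_def intro: card_mono)

lemma strict_mono_on_rank: "strict_mono_on (set A) (rank A)"
proof (rule strict_mono_onI)
  fix x z
  assume "x \<in> set A" "z \<in> set A" "x < z"
  then have "{y \<in> set A. y < x} \<subset> {y \<in> set A. y < z}"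
    by auto
  then show "rank A x < rank A z"
    unfolding rank_def by (simp add: psubset_card_mono)
qed

lemma rank_le_card:
  assumes "x \<in> set A"
  shows "rank A x \<le> card (set A)"
proof -
  have "{y \<in> set A. y < x} \<subset> set A"
    using assms by auto
  then show ?thesis
    unfolding rank_def by (simp add: psubset_card_mono Suc_le_eq)
qed

lemma standardize_is_perm:
  assumes "distinct A"
  shows "is_perm (length A) (standardize A)"
proof -
  have inj: "inj_on (rank A) (set A)"
    by (rule strict_mono_on_imp_inj_on[OF strict_mono_on_rank])
  have "rank A ` set A \<subseteq> {1..length A}"
    using rank_le_card[of _ A] distinct_card[OF assms] by (auto simp: rank_def)
  moreover have "card (rank A ` set A) = card {1..length A}"
    using card_image[OF inj] distinct_card[OF assms] by simp
  ultimately have "rank A ` set A = {1..length A}"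
    by (simp add: card_subset_eq)
  then show ?thesis
    using assms inj by (simp add: is_perm_def standardize_eq_map_rank distinct_map)
qed

lemma two_stack_sortable_iff_sorted:
  "two_stack_sortable \<sigma> \<longleftrightarrow>
     \<sigma> \<noteq> [] \<and> is_perm (length \<sigma>) \<sigma> \<and> sorted (stack_sort (stack_sort \<sigma>))"
proof (cases "is_perm (length \<sigma>) \<sigma>")
  case True
  have "mset (stack_sort (stack_sort \<sigma>)) = mset \<sigma>"
    by simp
  then have "distinct (stack_sort (stack_sort \<sigma>))"
    and "set (stack_sort (stack_sort \<sigma>)) = {1..length \<sigma>}"
    using True unfolding is_perm_def by (metis mset_eq_imp_distinct_iff, metis mset_eq_setD)
  then have "sorted (stack_sort (stack_sort \<sigma>)) \<longleftrightarrow> stack_sort (stack_sort \<sigma>) = [1..<length \<sigma> + 1]"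
    by (auto intro: sorted_distinct_set_unique simp del: upt_Suc)
  then show ?thesis
    unfolding two_stack_sortable_def using True by (auto simp: Suc_le_eq simp del: upt_Suc)
qed (simp add: two_stack_sortable_def)

lemma two_stack_sortable_standardize:
  assumes "distinct A" and "A \<noteq> []" and "sorted (stack_sort (stack_sort A))"
  shows "two_stack_sortable (standardize A)"
proof -
  have "stack_sort (stack_sort (standardize A)) = map (rank A) (stack_sort (stack_sort A))"
    using stack_sort_map strict_mono_on_rank
    by (metis set_stack_sort standardize_eq_map_rank)
  moreover have "sorted (map (rank A) (stack_sort (stack_sort A)))"
    unfolding sorted_map using assms(3)
    by (rule sorted_wrt_mono_rel[rotated]) (simp add: monoD[OF mono_rank])
  ultimately show ?thesis
    using assms standardize_is_perm
    by (simp add: two_stack_sortable_iff_sorted standardize_eq_map_rank)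
qed

theorem proposition4:
  fixes n :: nat and \<pi> \<pi>l \<pi>r :: "nat list"
  assumes "n \<ge> 1"
    and "is_perm n \<pi>"
    and "two_stack_sortable \<pi>"
    and "\<pi> = \<pi>l @ [n] @ \<pi>r"
  shows "(standardize \<pi>l = [] \<or> two_stack_sortable (standardize \<pi>l))
       \<and> (standardize \<pi>r = [] \<or> two_stack_sortable (standardize \<pi>r))"
proof -
  have "distinct \<pi>" "set \<pi> = {1..n}"
    using assms(2) unfolding is_perm_def by auto
  then have max: "n \<notin> set \<pi>l" "\<forall>x \<in> set \<pi>l \<union> set \<pi>r. x \<le> n"
    and dist: "distinct \<pi>l" "distinct \<pi>r"
    using assms(4) by auto
  have "sorted (stack_sort (stack_sort \<pi>))"
    using assms(3) two_stack_sortable_iff_sorted by blast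
  moreover have "stack_sort \<pi> = stack_sort \<pi>l @ stack_sort \<pi>r @ [n]"
    using assms(4) stack_sort_split_Max[OF max] by simp
  ultimately have "sorted (stack_sort (stack_sort \<pi>l))" "sorted (stack_sort (stack_sort \<pi>r))"
    by (auto elim!: sorted_stack_sort_subseq intro: subseq_drop_many)
  then show ?thesis
    using two_stack_sortable_standardize dist by (auto simp: standardize_def)
qed

end
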